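(* Let $(M,\mathcal D,g)$ be a three-dimensional contact sub-Riemannian manifold and $S$ an embedded oriented surface with sub-Riemannian characteristic vector field $X$. For $\varepsilon>0$ let $b_\varepsilon=\sqrt{1-\mathrm{div}(X)^2(1-\varepsilon)}=\sqrt{1-(1-|X|^2)(1-\varepsilon)}$. Then on $S\setminus\Sigma(S)$ the Riemannian $\varepsilon$-coframe satisfies $$\theta_1^\varepsilon=\theta_1,\qquad \theta_2^\varepsilon=\frac{b_\varepsilon}{\sqrt\varepsilon}\theta_2.$$
   Context: $M$ a smooth 3-manifold, $\mathcal D=\ker\omega$ a co-oriented contact distribution, $g$ a smooth metric on $\mathcal D$, $\omega$ normalized so that $d\omega(f_1,f_2)=1$ for positively oriented $g$-orthonormal frames of $\mathcal D$; Reeb field $f_0$: $\omega(f_0)=1$, $d\omega(f_0,\cdot)=0$. For $\varepsilon>0$, $g^\varepsilon$ is the Riemannian metric with $g^\varepsilon|_{\mathcal D}=g$, $g^\varepsilon(\mathcal D,f_0)=0$, $g^\varepsilon(f_0,f_0)=1/\varepsilon$; $\sigma^\varepsilon$ is the area form of $(S,g^\varepsilon|_S)$, $|\cdot|_\varepsilon$ its norm and $J^\varepsilon$ its complex structure (rotation by $+\pi/2$). $\Sigma(S)=\{p\in S:T_pS=\mathcal D_p\}$. The characteristic vector field $X$ is defined by $\iota_X\sigma^1=\omega|_S$; $\mathrm{div}$ is the divergence w.r.t. $\sigma^1$ and $|X|=|X|_1$. The Riemannian $\varepsilon$-frame on $S\setminus\Sigma(S)$ is $e_1^\varepsilon=X/|X|_\varepsilon$,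 $e_2^\varepsilon=J^\varepsilon X/|X|_\varepsilon$, with dual coframe $\theta_1^\varepsilon,\theta_2^\varepsilon$ ($\theta_i^\varepsilon(e_j^\varepsilon)=\delta_{ij}$); $\theta_i:=\theta_i^1$. *)

theory Defs
  imports "HOL-Analysis.Analysis"
begin

text \<open>Pointwise model at a point p of S. The tangent space T_pM is identified with
 real^3 via the frame (f0, f1, f2): component 0 is the Reeb (f0) coordinate, components
 1, 2 are the coordinates w.r.t. a g-orthonormal frame (f1, f2) of D_p.
 The tangent plane T_pS is span {u, w}, oriented by the ordered basis (u, w).\<close>

definition omega :: "real^3 \<Rightarrow> real" where
  "omega v = v $ 0"

definition distr :: "(real^3) set" where
  "distr = {v. omega v = 0}"

text \<open>The metric g^eps: g on D, D orthogonal to f0, g^eps(f0,f0) = 1/eps.\<close>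
definition gmet :: "real \<Rightarrow> real^3 \<Rightarrow> real^3 \<Rightarrow> real" where
  "gmet \<epsilon> a b = a $ 1 * b $ 1 + a $ 2 * b $ 2 + a $ 0 * b $ 0 / \<epsilon>"

definition normg :: "real \<Rightarrow> real^3 \<Rightarrow> real" where
  "normg \<epsilon> a = sqrt (gmet \<epsilon> a a)"

definition coords :: "real^3 \<Rightarrow> real^3 \<Rightarrow> real^3 \<Rightarrow> real \<times> real" where
  "coords u w a = (THE (s, t). a = s *\<^sub>R u + t *\<^sub>R w)"

definition sigma :: "real \<Rightarrow> real^3 \<Rightarrow> real^3 \<Rightarrow> real^3 \<Rightarrow> real^3 \<Rightarrow> real" where
  "sigma \<epsilon> u w a b =
     (let (a1, a2) = coords u w a; (b1, b2) = coords u w b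
      in (a1 * b2 - a2 * b1) * sqrt (gmet \<epsilon> u u * gmet \<epsilon> w w - (gmet \<epsilon> u w)\<^sup>2))"

definition Jrot :: "real \<Rightarrow> real^3 \<Rightarrow> real^3 \<Rightarrow> real^3 \<Rightarrow> real^3" where
  "Jrot \<epsilon> u w a = (THE c. c \<in> span {u, w} \<and>
      (\<forall>b\<in>span {u, w}. gmet \<epsilon> c b = sigma \<epsilon> u w a b))"

definition charX :: "real^3 \<Rightarrow> real^3 \<Rightarrow> real^3" where
  "charX u w = (THE x. x \<in> span {u, w} \<and>
      (\<forall>b\<in>span {u, w}. sigma 1 u w x b = omega b))"

definition frame1 :: "real \<Rightarrow> real^3 \<Rightarrow> real^3 \<Rightarrow> real^3" where
  "frame1 \<epsilon> u w = (1 / normg \<epsilon> (charX u w)) *\<^sub>R charX u w"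

definition frame2 :: "real \<Rightarrow> real^3 \<Rightarrow> real^3 \<Rightarrow> real^3" where
  "frame2 \<epsilon> u w = (1 / normg \<epsilon> (charX u w)) *\<^sub>R Jrot \<epsilon> u w (charX u w)"

definition coframe :: "real \<Rightarrow> real^3 \<Rightarrow> real^3 \<Rightarrow> real^3 \<Rightarrow> real \<times> real" where
  "coframe \<epsilon> u w v = coords (frame1 \<epsilon> u w) (frame2 \<epsilon> u w) v"

end

theory Submission
  imports Defs
begin

(* On the tangent plane P = span {u, w} the area form of g^eps is sigma^eps = sqrt (G_eps / G_1) sigma^1,
   where G_eps is the Gram determinant of (u, w) for g^eps; in terms of n = u \<times> w one has
   G_eps = n_0^2 + (n_1^2 + n_2^2) / eps.  The characteristic field X lies in D, so |X|_eps = |X|_1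
   and e_1^eps = e_1.  Every J^eps X is a multiple of one fixed vector of P (the line
   g^eps-orthogonal to X in P does not depend on eps), and normalising gives
   e_2 = sqrt (G_eps / G_1) e_2^eps.  Dualising yields theta_1^eps = theta_1 and
   theta_2^eps = sqrt (G_eps / G_1) theta_2, and |X|^2 = (n_1^2 + n_2^2) / G_1 turns
   sqrt (G_eps / G_1) into b_eps / sqrt eps. *)

unbundle cross3_syntax

lemma span_pair_iff:
  fixes u w :: "'a::real_vector"
  shows "v \<in> span {u, w} \<longleftrightarrow> (\<exists>s t. v = s *\<^sub>R u + t *\<^sub>R w)"
proof -
  have "span {u, w} = {x. \<exists>s. x - s *\<^sub>R u \<in> range (\<lambda>t. t *\<^sub>R w)}"
    by (simp add: span_insert[of u] span_singleton)
  then show ?thesis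
    by (auto, metis add.commute diff_add_cancel, metis add_diff_cancel_left' rangeI)
qed

lemma independent_pair_iff:
  fixes p q :: "'a::real_vector"
  shows "independent {p, q} \<and> p \<noteq> q \<longleftrightarrow> (\<forall>s t. s *\<^sub>R p + t *\<^sub>R q = 0 \<longrightarrow> s = 0 \<and> t = 0)"
proof
  assume "independent {p, q} \<and> p \<noteq> q"
  then have p_notin: "p \<notin> span {q}" and q_notin: "q \<notin> span {p}"
    unfolding dependent_def by (auto simp: insert_Diff_if)
  show "\<forall>s t. s *\<^sub>R p + t *\<^sub>R q = 0 \<longrightarrow> s = 0 \<and> t = 0"
  proof (intro allI impI)
    fix s t assume comb: "s *\<^sub>R p + t *\<^sub>R q = 0"
    have "s = 0"
    proof (rule ccontr)
      assume "s \<noteq> 0"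
      then have "p = (- t / s) *\<^sub>R q"
        using comb by (metis eq_neg_iff_add_eq_0 scaleR_left.minus vector_fraction_eq_iff)
      then show False using p_notin by (metis span_base span_scale singletonI)
    qed
    moreover have "t = 0"
    proof (rule ccontr)
      assume "t \<noteq> 0"
      then have "q = (- s / t) *\<^sub>R p"
        using comb by (metis add.commute eq_neg_iff_add_eq_0 scaleR_left.minus vector_fraction_eq_iff)
      then show False using q_notin by (metis span_base span_scale singletonI)
    qed
    ultimately show "s = 0 \<and> t = 0" ..
  qed
next
  assume trivial: "\<forall>s t. s *\<^sub>R p + t *\<^sub>R q = 0 \<longrightarrow> s = 0 \<and> t = 0"
  have "p \<noteq> q" using trivial[rule_format, of 1 "-1"] by auto
  moreover have "q \<notin> span {}" using trivial[rule_format, of 0 1] by auto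
  moreover have "p \<notin> span {q}"
  proof
    assume "p \<in> span {q}"
    then obtain k where "p = k *\<^sub>R q" by (auto simp: span_singleton)
    then show False using trivial[rule_format, of 1 "- k"] by simp
  qed
  ultimately show "independent {p, q} \<and> p \<noteq> q"
    by (simp add: independent_insertI)
qed

lemma coords_eqI:
  assumes "independent {p, q}" "p \<noteq> q" and "a = s *\<^sub>R p + t *\<^sub>R q"
  shows "coords p q a = (s, t)"
  unfolding coords_def
proof (rule the_equality)
  fix z assume "case z of (s', t') \<Rightarrow> a = s' *\<^sub>R p + t' *\<^sub>R q"
  then obtain s' t' where z: "z = (s', t')" and "a = s' *\<^sub>R p + t' *\<^sub>R q"
    by (cases z) auto
  then have "(s - s') *\<^sub>R p + (t - t') *\<^sub>R q = 0"
    using assms(3) by (simp add: algebra_simps)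
  then have "s - s' = 0 \<and> t - t' = 0"
    using assms(1,2) independent_pair_iff by blast
  then show "z = (s, t)" using z by simp
qed (use assms(3) in simp)

lemma span_pair_subset_span_pair:
  fixes u w p q :: "'a::euclidean_space"
  assumes "independent {u, w}" "u \<noteq> w" and "independent {p, q}" "p \<noteq> q"
    and "p \<in> span {u, w}" "q \<in> span {u, w}"
  shows "span {u, w} \<subseteq> span {p, q}"
proof (rule card_ge_dim_independent)
  show "{p, q} \<subseteq> span {u, w}" using assms(5,6) by simp
  have "dim (span {u, w}) = card {u, w}"
    using assms(1) by (simp add: dim_eq_card_independent)
  then show "dim (span {u, w}) \<le> card {p, q}" using assms(2,4) by simp
qed fact

lemma vec3_eq_iff: "(x::real^3) = y \<longleftrightarrow> x$0 = y$0 \<and> x$1 = y$1 \<and> x$2 = y$2"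
proof -
  have three: "(3::3) = 0" by simp
  show ?thesis unfolding vec_eq_iff forall_3 three by auto
qed

(* Cross3 numbers the components 1, 2, 3; in the index type 3 the numeral 3 is 0,
   the Reeb component. *)
lemma cross3_nth:
  "(u \<times> w) $ 0 = u$1 * w$2 - u$2 * w$1"
  "(u \<times> w) $ 1 = u$2 * w$0 - u$0 * w$2"
  "(u \<times> w) $ 2 = u$0 * w$1 - u$1 * w$0"
proof -
  have three: "(3::3) = 0" by simp
  show "(u \<times> w) $ 0 = u$1 * w$2 - u$2 * w$1"
    "(u \<times> w) $ 1 = u$2 * w$0 - u$0 * w$2"
    "(u \<times> w) $ 2 = u$0 * w$1 - u$1 * w$0"
    using cross_components[of u w] by (simp_all add: three mult.commute)
qed

lemma gmet_commute: "gmet \<epsilon> a b = gmet \<epsilon> b a"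
  by (simp add: gmet_def algebra_simps)

lemma gmet_scaleR_left: "gmet \<epsilon> (x *\<^sub>R a) c = x * gmet \<epsilon> a c"
  by (simp add: gmet_def algebra_simps)

lemma gmet_lincomb_left:
  "gmet \<epsilon> (x *\<^sub>R a + y *\<^sub>R b) c = x * gmet \<epsilon> a c + y * gmet \<epsilon> b c"
  by (simp add: gmet_def algebra_simps add_divide_distrib)

lemma gmet_diff_left: "gmet \<epsilon> (a - b) c = gmet \<epsilon> a c - gmet \<epsilon> b c"
  by (simp add: gmet_def algebra_simps diff_divide_distrib)

lemma gmet_self_nonneg: "\<epsilon> > 0 \<Longrightarrow> gmet \<epsilon> a a \<ge> 0"
  by (simp add: gmet_def)

lemma gmet_self_eq_0_iff:
  assumes "\<epsilon> > 0"
  shows "gmet \<epsilon> a a = 0 \<longleftrightarrow> a = 0"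
proof
  assume "gmet \<epsilon> a a = 0"
  moreover have "a$0 * a$0 / \<epsilon> \<ge> 0" using assms by simp
  ultimately have "a$1 * a$1 = 0" "a$2 * a$2 = 0" "a$0 * a$0 / \<epsilon> = 0"
    unfolding gmet_def by (smt (verit) zero_le_square)+
  then show "a = 0" using assms by (simp add: vec3_eq_iff)
qed (simp add: gmet_def)

lemma independent_pair_if_gmet_orthogonal:
  assumes "\<epsilon> > 0" "p \<noteq> 0" "q \<noteq> 0" "gmet \<epsilon> p q = 0"
  shows "independent {p, q} \<and> p \<noteq> q"
  unfolding independent_pair_iff
proof (intro allI impI)
  fix s t assume "s *\<^sub>R p + t *\<^sub>R q = 0"
  then have "gmet \<epsilon> (s *\<^sub>R p + t *\<^sub>R q) p = 0" "gmet \<epsilon> (s *\<^sub>R p + t *\<^sub>R q) q = 0"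
    by (simp_all add: gmet_def)
  then have "s * gmet \<epsilon> p p = 0" "t * gmet \<epsilon> q q = 0"
    using assms(4) by (simp_all add: gmet_lincomb_left gmet_commute[of \<epsilon> q p])
  then show "s = 0 \<and> t = 0" using assms(1-3) gmet_self_eq_0_iff by simp
qed

lemma normg_sq: "\<epsilon> > 0 \<Longrightarrow> (normg \<epsilon> a)\<^sup>2 = gmet \<epsilon> a a"
  unfolding normg_def using gmet_self_nonneg by simp

lemma normg_pos: "\<epsilon> > 0 \<Longrightarrow> a \<noteq> 0 \<Longrightarrow> normg \<epsilon> a > 0"
  unfolding normg_def using gmet_self_nonneg[of \<epsilon> a] gmet_self_eq_0_iff[of \<epsilon> a] by simp

lemma gmet_horizontal_left: "omega a = 0 \<Longrightarrow> gmet \<epsilon> a b = gmet 1 a b"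
  by (simp add: gmet_def omega_def)

lemma normg_horizontal: "omega a = 0 \<Longrightarrow> normg \<epsilon> a = normg 1 a"
  unfolding normg_def using gmet_horizontal_left by metis

definition gram :: "real \<Rightarrow> real^3 \<Rightarrow> real^3 \<Rightarrow> real" where
  "gram \<epsilon> u w = gmet \<epsilon> u u * gmet \<epsilon> w w - (gmet \<epsilon> u w)\<^sup>2"

lemma gram_cross3:
  assumes "\<epsilon> \<noteq> 0"
  shows "gram \<epsilon> u w = ((u \<times> w) $ 0)\<^sup>2 + (((u \<times> w) $ 1)\<^sup>2 + ((u \<times> w) $ 2)\<^sup>2) / \<epsilon>"
  using assms by (simp add: gram_def gmet_def cross3_nth field_simps power2_eq_square)

lemma cross3_neq_0_if_independent:
  assumes "independent {u, w}" "u \<noteq> w"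
  shows "u \<times> w \<noteq> 0"
proof
  assume "u \<times> w = 0"
  then consider "u = 0" | "w = 0" | c where "w = c *\<^sub>R u"
    unfolding cross_eq_0 collinear_lemma by blast
  moreover have trivial: "\<forall>s t. s *\<^sub>R u + t *\<^sub>R w = 0 \<longrightarrow> s = 0 \<and> t = 0"
    using assms independent_pair_iff by blast
  ultimately show False
  proof cases
    case 1
    then show False using trivial[rule_format, of 1 0] by simp
  next
    case 2
    then show False using trivial[rule_format, of 0 1] by simp
  next
    case (3 c)
    then show False using trivial[rule_format, of c "- 1"] by simp
  qed
qed

lemma gram_pos:
  assumes "independent {u, w}" "u \<noteq> w" "\<epsilon> > 0"
  shows "gram \<epsilon> u w > 0"
proof -
  have "(u \<times> w) $ 0 \<noteq> 0 \<or> ((u \<times> w) $ 1)\<^sup>2 + ((u \<times> w) $ 2)\<^sup>2 > 0"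
    using cross3_neq_0_if_independent[OF assms(1,2)] by (auto simp: vec3_eq_iff sum_power2_gt_zero_iff)
  then show ?thesis
    using assms(3) by (auto simp: gram_cross3 add_pos_nonneg add_nonneg_pos)
qed

lemma sigma_eq:
  assumes "independent {u, w}" "u \<noteq> w"
    and "a = a1 *\<^sub>R u + a2 *\<^sub>R w" "b = b1 *\<^sub>R u + b2 *\<^sub>R w"
  shows "sigma \<epsilon> u w a b = (a1 * b2 - a2 * b1) * sqrt (gram \<epsilon> u w)"
  unfolding sigma_def gram_def using coords_eqI[OF assms(1,2)] assms(3,4) by simp

lemma span_pair_eq_distr:
  assumes "independent {u, w}" "u \<noteq> w" "omega u = 0" "omega w = 0"
  shows "span {u, w} = distr"
proof (rule subspace_dim_equal)
  have distr_hyperplane: "distr = {x. axis 0 1 \<bullet> x = 0}"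
    unfolding distr_def omega_def by (simp add: inner_axis')
  show "subspace distr" unfolding distr_hyperplane by (rule subspace_hyperplane)
  then show "span {u, w} \<subseteq> distr"
    using assms(3,4) by (intro span_minimal) (auto simp: distr_def)
  have "dim distr = 2" unfolding distr_hyperplane by (simp add: dim_hyperplane)
  moreover have "dim (span {u, w}) = 2"
    using assms(1,2) by (simp add: dim_eq_card_independent)
  ultimately show "dim distr \<le> dim (span {u, w})" by simp
qed simp

lemma Jrot_eqI:
  assumes "\<epsilon> > 0" "c \<in> span {u, w}"
    and "\<And>b. b \<in> span {u, w} \<Longrightarrow> gmet \<epsilon> c b = sigma \<epsilon> u w a b"
  shows "Jrot \<epsilon> u w a = c"
  unfolding Jrot_def
proof (rule the_equality)
  fix c' assume c': "c' \<in> span {u, w} \<and> (\<forall>b\<in>span {u, w}. gmet \<epsilon> c' b = sigma \<epsilon> u w a b)"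
  then have "c' - c \<in> span {u, w}" using assms(2) by (simp add: span_diff)
  then have "gmet \<epsilon> (c' - c) (c' - c) = 0"
    using c' assms(3) by (simp add: gmet_diff_left)
  then show "c' = c" using assms(1) gmet_self_eq_0_iff by simp
qed (use assms in blast)

lemma charX_eq:
  assumes "independent {u, w}" "u \<noteq> w"
  shows "charX u w = (w$0 / sqrt (gram 1 u w)) *\<^sub>R u + (- u$0 / sqrt (gram 1 u w)) *\<^sub>R w"
    (is "_ = ?X")
proof -
  define K where "K = sqrt (gram 1 u w)"
  have "K > 0" unfolding K_def using gram_pos[OF assms] by simp
  have sigma_X: "sigma 1 u w ?X b = omega b" if "b \<in> span {u, w}" for b
  proof -
    obtain b1 b2 where b: "b = b1 *\<^sub>R u + b2 *\<^sub>R w" using \<open>b \<in> span {u, w}\<close> span_pair_iff by blast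
    have "sigma 1 u w ?X b = (w$0 / K * b2 - (- u$0 / K) * b1) * K"
      unfolding K_def by (rule sigma_eq[OF assms refl b])
    also have "\<dots> = omega b"
      using \<open>K > 0\<close> b by (simp add: omega_def field_simps)
    finally show ?thesis .
  qed
  show ?thesis
    unfolding charX_def
  proof (rule the_equality)
    fix x assume x: "x \<in> span {u, w} \<and> (\<forall>b\<in>span {u, w}. sigma 1 u w x b = omega b)"
    then obtain x1 x2 where x12: "x = x1 *\<^sub>R u + x2 *\<^sub>R w" using span_pair_iff by blast
    have "sigma 1 u w x u = omega u" "sigma 1 u w x w = omega w"
      using x by (simp_all add: span_base)
    then have "- x2 * K = u$0" "x1 * K = w$0"
      using sigma_eq[OF assms x12, of u 1 0 1] sigma_eq[OF assms x12, of w 0 1 1]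
      unfolding K_def by (simp_all add: omega_def)
    then have "x1 = w$0 / K" "x2 = - u$0 / K"
      using \<open>K > 0\<close> by (simp_all add: field_simps)
    then show "x = ?X" unfolding x12 K_def by simp
  qed (use sigma_X span_pair_iff in blast)
qed

lemma charX_horizontal:
  assumes "independent {u, w}" "u \<noteq> w"
  shows "omega (charX u w) = 0"
  unfolding charX_eq[OF assms] by (simp add: omega_def algebra_simps)

lemma charX_in_span:
  assumes "independent {u, w}" "u \<noteq> w"
  shows "charX u w \<in> span {u, w}"
  unfolding charX_eq[OF assms] span_pair_iff by blast

lemma charX_neq_0:
  assumes "independent {u, w}" "u \<noteq> w" "span {u, w} \<noteq> distr"
  shows "charX u w \<noteq> 0"
proof
  assume "charX u w = 0"
  then have "w$0 / sqrt (gram 1 u w) = 0 \<and> - u$0 / sqrt (gram 1 u w) = 0"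
    using assms(1,2) independent_pair_iff unfolding charX_eq[OF assms(1,2)] by blast
  then have "omega u = 0" "omega w = 0"
    using gram_pos[OF assms(1,2) zero_less_one] by (simp_all add: omega_def)
  then show False using span_pair_eq_distr assms by blast
qed

lemma normg_charX_sq:
  assumes "independent {u, w}" "u \<noteq> w"
  shows "(normg 1 (charX u w))\<^sup>2 = (((u \<times> w) $ 1)\<^sup>2 + ((u \<times> w) $ 2)\<^sup>2) / gram 1 u w"
proof -
  define K where "K = sqrt (gram 1 u w)"
  have "gram 1 u w > 0" using gram_pos[OF assms zero_less_one] .
  then have "K * K = gram 1 u w" "K > 0" unfolding K_def by simp_all
  with \<open>gram 1 u w > 0\<close> show ?thesis
    unfolding normg_sq[OF zero_less_one] charX_eq[OF assms] K_def[symmetric]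
    by (simp add: gmet_def cross3_nth field_simps power2_eq_square)
qed

lemma gram_ratio:
  assumes "independent {u, w}" "u \<noteq> w" "\<epsilon> > 0"
  shows "1 - (1 - (normg 1 (charX u w))\<^sup>2) * (1 - \<epsilon>) = \<epsilon> * gram \<epsilon> u w / gram 1 u w"
proof -
  have "gram 1 u w > 0" using gram_pos[OF assms(1,2)] by simp
  moreover have "gram \<epsilon> u w = ((u \<times> w) $ 0)\<^sup>2 + (((u \<times> w) $ 1)\<^sup>2 + ((u \<times> w) $ 2)\<^sup>2) / \<epsilon>"
    "gram 1 u w = ((u \<times> w) $ 0)\<^sup>2 + (((u \<times> w) $ 1)\<^sup>2 + ((u \<times> w) $ 2)\<^sup>2)"
    using gram_cross3 assms(3) by simp_all
  ultimately show ?thesis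
    using assms(3) unfolding normg_charX_sq[OF assms(1,2)] by (simp add: field_simps)
qed

(* Although built from g^1, this is gram eps u w times the g^eps-gradient of omega on P for
   every eps: that gradient is g^eps-orthogonal to the horizontal line ker omega \<inter> P, and on
   horizontal vectors all g^eps agree with g^1. *)
definition omega_dual :: "real^3 \<Rightarrow> real^3 \<Rightarrow> real^3" where
  "omega_dual u w =
     (gmet 1 w w * u$0 - gmet 1 u w * w$0) *\<^sub>R u + (gmet 1 u u * w$0 - gmet 1 u w * u$0) *\<^sub>R w"

lemma omega_dual_in_span: "omega_dual u w \<in> span {u, w}"
  unfolding omega_dual_def span_pair_iff by blast

lemma gmet_omega_dual:
  assumes "\<epsilon> \<noteq> 0" "b \<in> span {u, w}"
  shows "gmet \<epsilon> (omega_dual u w) b = gram \<epsilon> u w * omega b"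
proof -
  obtain b1 b2 where b: "b = b1 *\<^sub>R u + b2 *\<^sub>R w" using assms(2) span_pair_iff by blast
  show ?thesis
    unfolding b omega_dual_def gram_def
    using assms(1) by (simp add: gmet_def omega_def field_simps power2_eq_square)
qed

lemma omega_dual_neq_0:
  assumes "independent {u, w}" "u \<noteq> w" "span {u, w} \<noteq> distr"
  shows "omega_dual u w \<noteq> 0"
proof
  assume "omega_dual u w = 0"
  then have "gram 1 u w * omega u = 0" "gram 1 u w * omega w = 0"
    using gmet_omega_dual[of 1 u u w] gmet_omega_dual[of 1 w u w] by (simp_all add: gmet_def span_base)
  then have "omega u = 0" "omega w = 0"
    using gram_pos[OF assms(1,2) zero_less_one] by simp_all
  then show False using span_pair_eq_distr assms by blast
qed

lemma Jrot_charX_eq: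
  assumes "independent {u, w}" "u \<noteq> w" "\<epsilon> > 0"
  shows "Jrot \<epsilon> u w (charX u w) =
           (1 / (sqrt (gram \<epsilon> u w) * sqrt (gram 1 u w))) *\<^sub>R omega_dual u w"
proof (rule Jrot_eqI[OF assms(3)])
  define K where "K = sqrt (gram 1 u w)"
  define L where "L = sqrt (gram \<epsilon> u w)"
  have "K > 0" "L > 0" "L * L = gram \<epsilon> u w"
    unfolding K_def L_def using gram_pos[OF assms(1,2) zero_less_one] gram_pos[OF assms] by simp_all
  show "(1 / (L * K)) *\<^sub>R omega_dual u w \<in> span {u, w}"
    using omega_dual_in_span by (rule span_scale)
  fix b assume "b \<in> span {u, w}"
  then obtain b1 b2 where b: "b = b1 *\<^sub>R u + b2 *\<^sub>R w" using span_pair_iff by blast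
  have "sigma \<epsilon> u w (charX u w) b = (w$0 / K * b2 - (- u$0 / K) * b1) * L"
    unfolding K_def L_def by (rule sigma_eq[OF assms(1,2) charX_eq[OF assms(1,2)] b])
  also have "\<dots> = gram \<epsilon> u w * omega b / (L * K)"
    using \<open>K > 0\<close> \<open>L > 0\<close> \<open>L * L = gram \<epsilon> u w\<close>[symmetric] b
    by (simp add: omega_def field_simps)
  also have "\<dots> = gmet \<epsilon> ((1 / (L * K)) *\<^sub>R omega_dual u w) b"
    using gmet_omega_dual assms(3) \<open>b \<in> span {u, w}\<close> by (simp add: gmet_scaleR_left)
  finally show "gmet \<epsilon> ((1 / (L * K)) *\<^sub>R omega_dual u w) b = sigma \<epsilon> u w (charX u w) b" ..
qed

lemma frame1_eq:
  assumes "independent {u, w}" "u \<noteq> w"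
  shows "frame1 \<epsilon> u w = frame1 1 u w"
  unfolding frame1_def normg_horizontal[OF charX_horizontal[OF assms], of \<epsilon>] ..

lemma frame2_eq:
  assumes "independent {u, w}" "u \<noteq> w" "\<epsilon> > 0"
  shows "frame2 1 u w = (sqrt (gram \<epsilon> u w) / sqrt (gram 1 u w)) *\<^sub>R frame2 \<epsilon> u w"
proof -
  define K where "K = sqrt (gram 1 u w)"
  define L where "L = sqrt (gram \<epsilon> u w)"
  have "L > 0" unfolding L_def using gram_pos[OF assms] by simp
  then have "1 / (K * K) = L / K * (1 / (L * K))" by simp
  then show ?thesis
    unfolding frame2_def normg_horizontal[OF charX_horizontal[OF assms(1,2)], of \<epsilon>]
      Jrot_charX_eq[OF assms] Jrot_charX_eq[OF assms(1,2) zero_less_one] K_def[symmetric] L_def[symmetric]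
    by (simp only: scaleR_scaleR mult.commute mult.left_commute)
qed

lemma frames_in_span:
  assumes "independent {u, w}" "u \<noteq> w" "\<epsilon> > 0"
  shows "frame1 \<epsilon> u w \<in> span {u, w}" "frame2 \<epsilon> u w \<in> span {u, w}"
  unfolding frame1_def frame2_def Jrot_charX_eq[OF assms]
  using charX_in_span[OF assms(1,2)] omega_dual_in_span by (simp_all add: span_scale)

lemma frames_independent:
  assumes "independent {u, w}" "u \<noteq> w" "span {u, w} \<noteq> distr" "\<epsilon> > 0"
  shows "independent {frame1 \<epsilon> u w, frame2 \<epsilon> u w} \<and> frame1 \<epsilon> u w \<noteq> frame2 \<epsilon> u w"
proof (rule independent_pair_if_gmet_orthogonal[OF assms(4)])
  let ?X = "charX u w"
  have "normg \<epsilon> ?X > 0" using normg_pos[OF assms(4) charX_neq_0[OF assms(1-3)]] .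
  moreover have "gram \<epsilon> u w > 0" using gram_pos[OF assms(1,2,4)] .
  ultimately show "frame1 \<epsilon> u w \<noteq> 0" "frame2 \<epsilon> u w \<noteq> 0"
    unfolding frame1_def frame2_def Jrot_charX_eq[OF assms(1,2,4)]
    using charX_neq_0[OF assms(1-3)] omega_dual_neq_0[OF assms(1-3)]
      gram_pos[OF assms(1,2) zero_less_one] by simp_all
  have "gmet \<epsilon> (omega_dual u w) ?X = 0"
    using gmet_omega_dual[OF _ charX_in_span[OF assms(1,2)]] charX_horizontal[OF assms(1,2)] assms(4)
    by simp
  then show "gmet \<epsilon> (frame1 \<epsilon> u w) (frame2 \<epsilon> u w) = 0"
    unfolding frame1_def frame2_def Jrot_charX_eq[OF assms(1,2,4)]
    by (simp add: gmet_scaleR_left gmet_commute[of \<epsilon> ?X])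
qed

theorem lemma5p5:
  fixes u w :: "real^3" and \<epsilon> :: real
  assumes "independent {u, w}" and "u \<noteq> w"
    and "span {u, w} \<noteq> distr"
    and "\<epsilon> > 0"
  shows "\<forall>v\<in>span {u, w}.
     fst (coframe \<epsilon> u w v) = fst (coframe 1 u w v) \<and>
     snd (coframe \<epsilon> u w v) =
       sqrt (1 - (1 - (normg 1 (charX u w))\<^sup>2) * (1 - \<epsilon>)) / sqrt \<epsilon> * snd (coframe 1 u w v)"
proof -
  define \<rho> where "\<rho> = sqrt (gram \<epsilon> u w) / sqrt (gram 1 u w)"
  have \<rho>_eq: "sqrt (1 - (1 - (normg 1 (charX u w))\<^sup>2) * (1 - \<epsilon>)) / sqrt \<epsilon> = \<rho>"
    using assms(4) unfolding gram_ratio[OF assms(1,2,4)] \<rho>_def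
    by (simp add: real_sqrt_mult real_sqrt_divide)
  have indep1: "independent {frame1 1 u w, frame2 1 u w} \<and> frame1 1 u w \<noteq> frame2 1 u w"
    using frames_independent[OF assms(1-3) zero_less_one] .
  have span_frames: "span {u, w} \<subseteq> span {frame1 1 u w, frame2 1 u w}"
    using span_pair_subset_span_pair[OF assms(1,2)] indep1 frames_in_span[OF assms(1,2) zero_less_one]
    by blast
  show ?thesis
  proof
    fix v assume "v \<in> span {u, w}"
    then obtain s t where v: "v = s *\<^sub>R frame1 1 u w + t *\<^sub>R frame2 1 u w"
      using span_frames span_pair_iff by blast
    then have coframe_1: "coframe 1 u w v = (s, t)"
      unfolding coframe_def using coords_eqI indep1 by blast
    have "v = s *\<^sub>R frame1 \<epsilon> u w + (\<rho> * t) *\<^sub>R frame2 \<epsilon> u w"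
      unfolding v frame1_eq[OF assms(1,2), of \<epsilon>] frame2_eq[OF assms(1,2,4)] \<rho>_def
      by (simp add: mult.commute)
    then have coframe_\<epsilon>: "coframe \<epsilon> u w v = (s, \<rho> * t)"
      unfolding coframe_def using coords_eqI frames_independent[OF assms] by blast
    show "fst (coframe \<epsilon> u w v) = fst (coframe 1 u w v) \<and>
       snd (coframe \<epsilon> u w v) =
       sqrt (1 - (1 - (normg 1 (charX u w))\<^sup>2) * (1 - \<epsilon>)) / sqrt \<epsilon> * snd (coframe 1 u w v)"
      unfolding coframe_1 coframe_\<epsilon> \<rho>_eq by simp
  qed
qed

end
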